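(* Let $k\ge 4$ and let $\sigma\in S_k\setminus Z_k$ with $\sigma(1)=1$. Then there exists $i\in\{1,2,\dots,k\}$ such that $F_i(\sigma)\in S_{k-1}\setminus Z_{k-1}$.
   Context: $S_k$ is the group of permutations of $\{1,\dots,k\}$, and $Z_k=\{z_0,\dots,z_{k-1}\}\subseteq S_k$ is the subgroup of cyclic shifts, $z_h(i)=i+h$ if $i\le k-h$ and $z_h(i)=i+h-k$ if $i>k-h$. For $i\in\{1,\dots,k\}$ and $\sigma\in S_k$, $F_i(\sigma)\in S_{k-1}$ is defined for $j\in\{1,\dots,k-1\}$ by: $F_i(\sigma)(j)=\sigma(j)$ if $j<i$ and $\sigma(j)<\sigma(i)$; $=\sigma(j)-1$ if $j<i$ and $\sigma(j)>\sigma(i)$; $=\sigma(j+1)$ if $j\ge i$ and $\sigma(j+1)<\sigma(i)$; $=\sigma(j+1)-1$ if $j\ge i$ and $\sigma(j+1)>\sigma(i)$. (That is, delete position $i$ and the value $\sigma(i)$ and relabel order-preservingly.) *)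

theory Defs
  imports "HOL-Combinatorics.Permutations"
begin

text \<open>Permutations of {1..k} are functions nat => nat with sigma permutes {1..k}
  (identity outside {1..k}).\<close>

definition zshift :: "nat \<Rightarrow> nat \<Rightarrow> nat \<Rightarrow> nat" where
  "zshift k h i = (if i \<in> {1..k} then (if i \<le> k - h then i + h else i + h - k) else i)"

definition Zk :: "nat \<Rightarrow> (nat \<Rightarrow> nat) set" where
  "Zk k = {zshift k h | h. h < k}"

definition Fdel :: "nat \<Rightarrow> nat \<Rightarrow> (nat \<Rightarrow> nat) \<Rightarrow> nat \<Rightarrow> nat" where
  "Fdel k i \<sigma> j =
     (if j \<in> {1..k-1} then
        (if j < i then (if \<sigma> j < \<sigma> i then \<sigma> j else \<sigma> j - 1)
         else (if \<sigma> (j+1) < \<sigma> i then \<sigma> (j+1) else \<sigma> (j+1) - 1))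
      else j)"

end

theory Submission
  imports Defs
begin

(* Since the identity is a cyclic shift, sigma has an inversion a < b, sigma b < sigma a.
   As k \<ge> 4, some position i \<in> {2,3,4} differs from a and b.  Deleting it keeps the value 1
   at position 1 (as sigma 1 = 1) and keeps the inversion, because F_i is order preserving on
   the remaining positions.  But the only cyclic shift fixing 1 is the identity, which has no
   inversion. *)

definition skip :: "nat \<Rightarrow> nat \<Rightarrow> nat" where
  "skip i j = (if j < i then j else Suc j)"

definition squeeze :: "nat \<Rightarrow> nat \<Rightarrow> nat" where
  "squeeze c v = (if v < c then v else v - 1)"

lemma squeeze_less_iff:
  assumes "v \<noteq> c" "w \<noteq> c"
  shows "squeeze c v < squeeze c w \<longleftrightarrow> v < w"
  using assms unfolding squeeze_def by auto

lemma Fdel_eq_squeeze: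
  assumes "j \<in> {1..k-1}"
  shows "Fdel k i \<sigma> j = squeeze (\<sigma> i) (\<sigma> (skip i j))"
  using assms unfolding Fdel_def squeeze_def skip_def by simp

lemma Fdel_less_iff:
  assumes "inj \<sigma>" "j \<in> {1..k-1}" "j' \<in> {1..k-1}"
  shows "Fdel k i \<sigma> j < Fdel k i \<sigma> j' \<longleftrightarrow> \<sigma> (skip i j) < \<sigma> (skip i j')"
proof -
  have "skip i j \<noteq> i" "skip i j' \<noteq> i"
    unfolding skip_def by auto
  then have "\<sigma> (skip i j) \<noteq> \<sigma> i" "\<sigma> (skip i j') \<noteq> \<sigma> i"
    using \<open>inj \<sigma>\<close> by (auto dest: injD)
  then show ?thesis
    using assms(2,3) by (simp add: Fdel_eq_squeeze squeeze_less_iff)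
qed

lemma Fdel_permutes:
  assumes \<sigma>: "\<sigma> permutes {1..k}" and i: "i \<in> {1..k}"
  shows "Fdel k i \<sigma> permutes {1..k-1}"
proof (rule bij_imp_permutes)
  have inj: "inj \<sigma>"
    using \<sigma> by (rule permutes_inj)
  have inj_on: "inj_on (Fdel k i \<sigma>) {1..k-1}"
  proof (rule inj_onI)
    fix j j' assume j: "j \<in> {1..k-1}" and j': "j' \<in> {1..k-1}"
      and eq: "Fdel k i \<sigma> j = Fdel k i \<sigma> j'"
    then have "\<sigma> (skip i j) = \<sigma> (skip i j')"
      using Fdel_less_iff[where i=i, OF inj j j'] Fdel_less_iff[where i=i, OF inj j' j]
      by linarith
    then have "skip i j = skip i j'"
      by (rule injD[OF inj])
    then show "j = j'"
      unfolding skip_def by (auto split: if_splits)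
  qed
  have "Fdel k i \<sigma> j \<in> {1..k-1}" if j: "j \<in> {1..k-1}" for j
  proof -
    have "skip i j \<in> {1..k}" "skip i j \<noteq> i"
      using i j unfolding skip_def by auto
    then have "\<sigma> (skip i j) \<in> {1..k}" "\<sigma> i \<in> {1..k}" "\<sigma> (skip i j) \<noteq> \<sigma> i"
      using i permutes_in_image[OF \<sigma>] inj by (blast dest: injD)+
    then show ?thesis
      unfolding Fdel_eq_squeeze[OF j] squeeze_def by auto
  qed
  then have "Fdel k i \<sigma> ` {1..k-1} \<subseteq> {1..k-1}"
    by blast
  then show "bij_betw (Fdel k i \<sigma>) {1..k-1} {1..k-1}"
    using inj_on by (simp add: bij_betw_def endo_inj_surj)
  show "Fdel k i \<sigma> x = x" if "x \<notin> {1..k-1}" for x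
    by (simp only: Fdel_def if_not_P[OF that])
qed

lemma Fdel_keeps_inversion:
  assumes "inj \<sigma>" "i \<in> {1..k}" "a \<in> {1..k}" "b \<in> {1..k}" "a < b" "i \<noteq> a" "i \<noteq> b"
    and "\<sigma> b < \<sigma> a"
  shows "\<exists>x\<in>{1..k-1}. \<exists>y\<in>{1..k-1}. x < y \<and> Fdel k i \<sigma> y < Fdel k i \<sigma> x"
proof -
  define x where "x = (if a < i then a else a - 1)"
  define y where "y = (if b < i then b else b - 1)"
  have xy: "x \<in> {1..k-1}" "y \<in> {1..k-1}" "x < y" and skip: "skip i x = a" "skip i y = b"
    using assms(2-7) unfolding x_def y_def skip_def by auto
  have "Fdel k i \<sigma> y < Fdel k i \<sigma> x"
    unfolding Fdel_less_iff[OF assms(1) xy(2,1)] skip by fact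
  with xy show ?thesis
    by blast
qed

lemma Fdel_fixes_1:
  assumes "\<sigma> permutes {1..k}" "\<sigma> 1 = 1" "i \<in> {2..k}"
  shows "Fdel k i \<sigma> 1 = 1"
proof -
  have "i \<in> {1..k}"
    using assms(3) by simp
  then have "\<sigma> i \<in> {1..k}"
    using permutes_in_image[OF assms(1)] by blast
  moreover have "\<sigma> i \<noteq> \<sigma> 1"
    using assms(3) by (simp add: inj_eq[OF permutes_inj[OF assms(1)]])
  ultimately have "squeeze (\<sigma> i) (\<sigma> 1) = 1"
    using assms(2) unfolding squeeze_def by simp
  moreover have "1 \<in> {1..k-1}" "skip i 1 = 1"
    using assms(3) unfolding skip_def by auto
  ultimately show ?thesis
    by (simp add: Fdel_eq_squeeze)
qed

lemma id_in_Zk: "0 < k \<Longrightarrow> id \<in> Zk k"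
  unfolding Zk_def zshift_def by (auto intro!: exI[of _ 0])

lemma Zk_fixing_1_eq_id:
  assumes "f \<in> Zk k" "f 1 = 1"
  shows "f = id"
proof -
  obtain h where h: "h < k" "f = zshift k h"
    using assms(1) unfolding Zk_def by blast
  then have "zshift k h 1 = 1 + h"
    unfolding zshift_def by simp
  then have "h = 0"
    using assms(2) h(2) by simp
  then show ?thesis
    using h(2) by (auto simp: zshift_def)
qed

lemma permutes_neq_id_inversion:
  fixes \<sigma> :: "'a::wellorder \<Rightarrow> 'a"
  assumes \<sigma>: "\<sigma> permutes S" and "\<sigma> \<noteq> id"
  shows "\<exists>a\<in>S. \<exists>b\<in>S. a < b \<and> \<sigma> b < \<sigma> a"
proof -
  have "\<exists>x. \<sigma> x \<noteq> x"
    using \<open>\<sigma> \<noteq> id\<close> by auto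
  define a where "a = (LEAST x. \<sigma> x \<noteq> x)"
  have a: "\<sigma> a \<noteq> a"
    unfolding a_def by (rule LeastI_ex) fact
  have below_a: "\<sigma> x = x" if "x < a" for x
    using that not_less_Least unfolding a_def by blast
  have inj: "inj \<sigma>"
    using \<sigma> by (rule permutes_inj)
  have "a < \<sigma> a"
  proof (rule ccontr)
    assume "\<not> a < \<sigma> a"
    then have "\<sigma> (\<sigma> a) = \<sigma> a"
      using a below_a by simp
    then show False
      using a inj by (auto dest: injD)
  qed
  obtain b where b: "\<sigma> b = a"
    using permutes_surj[OF \<sigma>] by (metis surjD)
  have "a < b"
    using a b below_a by (metis linorder_neqE)
  moreover have "a \<in> S" "b \<in> S"
    using a b \<open>a < b\<close> permutes_not_in[OF \<sigma>] by (metis less_irrefl)+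
  ultimately show ?thesis
    using b \<open>a < \<sigma> a\<close> by blast
qed

theorem lemma4p5:
  fixes k :: nat and \<sigma> :: "nat \<Rightarrow> nat"
  assumes "k \<ge> 4"
    and "\<sigma> permutes {1..k}"
    and "\<sigma> \<notin> Zk k"
    and "\<sigma> 1 = 1"
  shows "\<exists>i\<in>{1..k}. Fdel k i \<sigma> permutes {1..k-1} \<and> Fdel k i \<sigma> \<notin> Zk (k-1)"
proof -
  have "\<sigma> \<noteq> id"
    using assms(1,3) id_in_Zk by auto
  then obtain a b where ab: "a \<in> {1..k}" "b \<in> {1..k}" "a < b" "\<sigma> b < \<sigma> a"
    using permutes_neq_id_inversion[OF assms(2)] by blast
  have "\<exists>i\<in>{2,3,4::nat}. i \<noteq> a \<and> i \<noteq> b"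
    using ab(3) by auto
  then obtain i where "i \<in> {2,3,4::nat}" and i: "i \<noteq> a" "i \<noteq> b"
    by blast
  then have i2: "i \<in> {2..k}" and i1: "i \<in> {1..k}"
    using assms(1) by auto
  have "Fdel k i \<sigma> \<notin> Zk (k-1)"
  proof
    assume "Fdel k i \<sigma> \<in> Zk (k-1)"
    then have "Fdel k i \<sigma> = id"
      using Zk_fixing_1_eq_id Fdel_fixes_1[OF assms(2,4) i2] by blast
    then show False
      using Fdel_keeps_inversion[OF permutes_inj[OF assms(2)] i1 ab(1-3) i ab(4)] by auto
  qed
  then show ?thesis
    using i1 Fdel_permutes[OF assms(2) i1] by blast
qed

end
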